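(* Let $a\in\mathcal{S}(X^{\ast})$, $b\in\mathcal{S}(X)$ and $c\in\mathcal{S}^\infty(X\times X)$. For $\tau\in\operatorname{End}_{\mathbb{R}}(X)$ define $\mathcal{K}(x,y;\tau)=c(x,y)\,b(x-y)\,\mathcal{F}^{-1}a((1-\tau)x+\tau y)$, $(x,y)\in X\times X$. Then $\mathcal{K}(\cdot,\cdot;\tau)\in L^2(X\times X)$ for every $\tau$, and the mapping $\operatorname{End}_{\mathbb{R}}(X)\ni\tau\mapsto\mathcal{K}(\cdot,\cdot;\tau)\in L^2(X\times X)$ is continuous.
   Context: $X$ is a real Euclidean space of dimension $n$, $X^{\ast}$ its dual; $X\times X$ carries the product Euclidean structure; $\langle v\rangle=(1+|v|^2)^{1/2}$. $\mathcal{S}$ denotes Schwartz spaces. For a Euclidean space $V$, $\mathcal{S}^m(V)$ is the space of $f\in\mathcal{C}^\infty(V)$ with $|\partial^\alpha f(v)|\le C_\alpha\langle v\rangle^{m-|\alpha|}$ for all multi-indices $\alpha$, and $\mathcal{S}^\infty(V)=\bigcup_{m\in\mathbb{R}}\mathcal{S}^m(V)$. $\mathcal{F}^{-1}$ is the inverse Fourier transform from $X^{\ast}$ to $X$. *)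

theory Defs
  imports "HOL-Analysis.Analysis"
begin

text \<open>Iterated directional (Frechet) derivatives along a list of directions.
  A multi-index alpha corresponds to a list of basis vectors.\<close>
fun iter_deriv :: "'a::real_normed_vector list \<Rightarrow> ('a \<Rightarrow> 'b::real_normed_vector) \<Rightarrow> 'a \<Rightarrow> 'b" where
  "iter_deriv [] f = f"
| "iter_deriv (v # vs) f = (\<lambda>x. frechet_derivative (iter_deriv vs f) (at x) v)"

definition smooth_fun :: "('a::euclidean_space \<Rightarrow> 'b::real_normed_vector) \<Rightarrow> bool" where
  "smooth_fun f \<longleftrightarrow> (\<forall>vs. set vs \<subseteq> Basis \<longrightarrow> (\<forall>x. iter_deriv vs f differentiable (at x)))"

definition jbr :: "'a::real_normed_vector \<Rightarrow> real" where
  "jbr v = sqrt (1 + (norm v)\<^sup>2)"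

definition schwartz :: "('a::euclidean_space \<Rightarrow> complex) set" where
  "schwartz = {f. smooth_fun f \<and>
     (\<forall>vs. set vs \<subseteq> Basis \<longrightarrow> (\<forall>N::nat. \<exists>C. \<forall>x. jbr x ^ N * norm (iter_deriv vs f x) \<le> C))}"

definition symbol_class :: "real \<Rightarrow> ('a::euclidean_space \<Rightarrow> complex) set" where
  "symbol_class m = {f. smooth_fun f \<and>
     (\<forall>vs. set vs \<subseteq> Basis \<longrightarrow> (\<exists>C. \<forall>v. norm (iter_deriv vs f v) \<le> C * jbr v powr (m - real (length vs))))}"

definition symbol_class_inf :: "('a::euclidean_space \<Rightarrow> complex) set" where
  "symbol_class_inf = (\<Union>m. symbol_class m)"

text \<open>Inverse Fourier transform from \<open>X*\<close> to \<open>X\<close>; \<open>X*\<close> is identified with \<open>X\<close>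
  via the inner product, the pairing being \<open>x \<bullet> \<xi>\<close>.\<close>
definition inv_fourier :: "('a::euclidean_space \<Rightarrow> complex) \<Rightarrow> 'a \<Rightarrow> complex" where
  "inv_fourier a x = (LINT \<xi>|lborel. exp (\<i> * complex_of_real (x \<bullet> \<xi>)) * a \<xi>) / complex_of_real ((2 * pi) ^ DIM('a))"

definition kernelK :: "('a::euclidean_space \<Rightarrow> complex) \<Rightarrow> ('a \<Rightarrow> complex) \<Rightarrow> ('a \<times> 'a \<Rightarrow> complex)
    \<Rightarrow> ('a \<Rightarrow>\<^sub>L 'a) \<Rightarrow> 'a \<times> 'a \<Rightarrow> complex" where
  "kernelK a b c \<tau> z = (case z of (x, y) \<Rightarrow>
      c (x, y) * b (x - y) * inv_fourier a ((x - \<tau> x) + \<tau> y))"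

definition L2 :: "('a::euclidean_space \<Rightarrow> complex) \<Rightarrow> bool" where
  "L2 f \<longleftrightarrow> f \<in> borel_measurable lborel \<and> integrable lborel (\<lambda>z. (norm (f z))\<^sup>2)"

definition L2_dist :: "('a::euclidean_space \<Rightarrow> complex) \<Rightarrow> ('a \<Rightarrow> complex) \<Rightarrow> real" where
  "L2_dist f g = sqrt (LINT z|lborel. (norm (f z - g z))\<^sup>2)"

end

theory Submission
  imports Defs
begin

text \<open>For bounded \<open>\<tau>\<close>, the point \<open>(x, y)\<close> is controlled by \<open>x - y\<close> and
  \<open>w = (1 - \<tau>) x + \<tau> y\<close>, because \<open>x = w + \<tau> (x - y)\<close>. Hence, once \<open>b\<close> and \<open>\<F>\<^sup>-\<^sup>1 a\<close> decay faster
  than any power of \<open>\<langle>\<cdot>\<rangle>\<close>, the kernel is bounded by \<open>G \<langle>(x, y)\<rangle>\<^sup>-\<^sup>N\<close> for every \<open>N\<close>, uniformly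
  for \<open>\<tau>\<close> in bounded sets; this gives square integrability, and dominated convergence gives
  continuity in \<open>\<tau>\<close>.

  The rapid decay of the Fourier integral of a Schwartz function \<open>a\<close> is obtained without
  integration by parts: if \<open>(w \<bullet> e) h = \<pi>\<close>, the translation by \<open>h e\<close> changes the sign of
  \<open>exp (i w \<bullet> \<xi>)\<close>, so the \<open>k\<close>-th difference of \<open>a\<close> with step \<open>h e\<close> has \<open>2\<^sup>k\<close> times the
  Fourier integral of \<open>a\<close>, while by the mean value theorem it is \<open>O(\<bar>h\<bar>\<^sup>k) = O(\<bar>w \<bullet> e\<bar>\<^sup>-\<^sup>k)\<close>.\<close>

section \<open>The Japanese bracket\<close>

lemma jbr_ge_1: "1 \<le> jbr v"
  unfolding jbr_def by simp

lemma jbr_pos: "0 < jbr v"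
  using jbr_ge_1[of v] by linarith

lemma jbr_le_1_plus_norm: "jbr v \<le> 1 + norm v"
proof -
  have "1 + (norm v)\<^sup>2 \<le> (1 + norm v)\<^sup>2"
    by (simp add: power2_eq_square algebra_simps)
  then show ?thesis
    unfolding jbr_def by (rule real_le_lsqrt[rotated]) simp
qed

lemma jbr_add_le: "jbr (x + y) \<le> sqrt 2 * jbr x * jbr y"
proof -
  have "(norm (x + y))\<^sup>2 \<le> (norm x + norm y)\<^sup>2"
    by (simp add: norm_triangle_ineq power_mono)
  also have "\<dots> \<le> 2 * (norm x)\<^sup>2 + 2 * (norm y)\<^sup>2"
    using sum_squares_bound[of "norm x" "norm y"] by (simp add: power2_sum)
  finally have "1 + (norm (x + y))\<^sup>2 \<le> 2 * ((1 + (norm x)\<^sup>2) * (1 + (norm y)\<^sup>2))"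
    using zero_le_power2[of "norm x * norm y"] unfolding power_mult_distrib distrib_left distrib_right
    by linarith
  then have "sqrt (1 + (norm (x + y))\<^sup>2) \<le> sqrt (2 * ((1 + (norm x)\<^sup>2) * (1 + (norm y)\<^sup>2)))"
    by (rule real_sqrt_le_mono)
  then show ?thesis
    unfolding jbr_def by (simp only: real_sqrt_mult mult.assoc)
qed

lemma jbr_le_translate: "jbr x \<le> sqrt 2 * (1 + norm v) * jbr (x + v)"
proof -
  have "jbr x \<le> sqrt 2 * jbr (x + v) * jbr (- v)"
    using jbr_add_le[of "x + v" "- v"] by simp
  also have "\<dots> \<le> sqrt 2 * jbr (x + v) * (1 + norm v)"
    using jbr_le_1_plus_norm[of "- v"] jbr_pos[of "x + v"] by (intro mult_left_mono) auto
  finally show ?thesis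
    by (simp add: mult_ac)
qed

lemma jbr_Pair_le: "jbr (x, y) \<le> sqrt 3 * jbr x * jbr (x - y)"
proof -
  have "norm y \<le> norm x + norm (x - y)"
    by (metis norm_triangle_sub add.commute norm_minus_commute)
  then have "(norm y)\<^sup>2 \<le> (norm x + norm (x - y))\<^sup>2"
    by (simp add: power_mono)
  also have "\<dots> \<le> 2 * (norm x)\<^sup>2 + 2 * (norm (x - y))\<^sup>2"
    using sum_squares_bound[of "norm x" "norm (x - y)"] by (simp add: power2_sum)
  moreover have "(norm (x, y))\<^sup>2 = (norm x)\<^sup>2 + (norm y)\<^sup>2"
    unfolding norm_Pair by simp
  ultimately have "1 + (norm (x, y))\<^sup>2 \<le> 3 * ((1 + (norm x)\<^sup>2) * (1 + (norm (x - y))\<^sup>2))"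
    using zero_le_power2[of "norm x * norm (x - y)"] zero_le_power2[of "norm x"] zero_le_power2[of "norm (x - y)"]
    unfolding power_mult_distrib distrib_left distrib_right by linarith
  then have "sqrt (1 + (norm (x, y))\<^sup>2) \<le> sqrt (3 * ((1 + (norm x)\<^sup>2) * (1 + (norm (x - y))\<^sup>2)))"
    by (rule real_sqrt_le_mono)
  then show ?thesis
    unfolding jbr_def by (simp only: real_sqrt_mult mult.assoc)
qed

lemma jbr_le_scale:
  assumes "norm v \<le> R * norm u" and "1 \<le> R"
  shows "jbr v \<le> R * jbr u"
proof -
  have "(norm v)\<^sup>2 \<le> (R * norm u)\<^sup>2"
    using assms(1) by (simp add: power_mono)
  moreover have "1 \<le> R\<^sup>2"
    using assms(2) by (simp add: one_le_power)
  ultimately have "1 + (norm v)\<^sup>2 \<le> R\<^sup>2 * (1 + (norm u)\<^sup>2)"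
    by (simp add: power_mult_distrib algebra_simps)
  then have "sqrt (1 + (norm v)\<^sup>2) \<le> sqrt (R\<^sup>2 * (1 + (norm u)\<^sup>2))"
    by (rule real_sqrt_le_mono)
  then show ?thesis
    unfolding jbr_def using assms(2) by (simp add: real_sqrt_mult)
qed

section \<open>An integrable weight\<close>

definition decay_weight :: "'c::euclidean_space \<Rightarrow> real" where
  "decay_weight z = inverse (jbr z ^ (2 * DIM('c)))"

lemma decay_weight_pos: "0 < decay_weight z"
  unfolding decay_weight_def by (intro positive_imp_inverse_positive zero_less_power jbr_pos)

lemma jbr_power_mult_le_iff:
  fixes z :: "'c::euclidean_space"
  shows "jbr z ^ (2 * DIM('c)) * t \<le> C \<longleftrightarrow> t \<le> C * decay_weight z"
  using jbr_pos[of z] unfolding decay_weight_def by (simp add: field_simps)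

lemma integrable_inverse_1_plus_square: "integrable lborel (\<lambda>t::real. inverse (1 + t\<^sup>2))"
proof -
  have "set_integrable lborel (einterval (-\<infinity>) \<infinity>) (\<lambda>t::real. inverse (1 + t\<^sup>2))"
  proof (rule interval_integral_FTC_nonneg(1)[where F=arctan and A="-(pi/2)" and B="pi/2"])
    show "DERIV arctan x :> inverse (1 + x\<^sup>2)" for x
      by (auto intro!: derivative_eq_intros simp: field_simps power2_eq_square)
    show "isCont (\<lambda>t. inverse (1 + t\<^sup>2)) x" for x :: real
      by (intro continuous_intros) (smt (verit) zero_le_power2)
    show "((arctan \<circ> real_of_ereal) \<longlongrightarrow> - (pi / 2)) (at_right (- \<infinity>))"
      by (simp add: ereal_tendsto_simps tendsto_arctan_at_bot)
    show "((arctan \<circ> real_of_ereal) \<longlongrightarrow> (pi / 2)) (at_left \<infinity>)"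
      by (simp add: ereal_tendsto_simps tendsto_arctan_at_top)
  qed auto
  then show ?thesis
    by (simp add: set_integrable_def)
qed

lemma decay_weight_le_prod:
  fixes z :: "'c::euclidean_space"
  shows "decay_weight z \<le> (\<Prod>b\<in>Basis. inverse (1 + (z \<bullet> b)\<^sup>2))"
proof -
  have "(\<Prod>b\<in>(Basis::'c set). 1 + (z \<bullet> b)\<^sup>2) \<le> (\<Prod>b\<in>(Basis::'c set). 1 + (norm z)\<^sup>2)"
  proof (rule prod_mono)
    fix b :: 'c
    assume "b \<in> Basis"
    then have "\<bar>z \<bullet> b\<bar> \<le> norm z"
      by (simp add: Basis_le_norm)
    then have "(z \<bullet> b)\<^sup>2 \<le> (norm z)\<^sup>2"
      by (metis abs_ge_zero power2_abs power_mono)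
    then show "0 \<le> 1 + (z \<bullet> b)\<^sup>2 \<and> 1 + (z \<bullet> b)\<^sup>2 \<le> 1 + (norm z)\<^sup>2"
      by simp
  qed
  then have "inverse (\<Prod>b\<in>(Basis::'c set). 1 + (norm z)\<^sup>2) \<le> inverse (\<Prod>b\<in>(Basis::'c set). 1 + (z \<bullet> b)\<^sup>2)"
    by (intro le_imp_inverse_le) (auto intro!: prod_pos simp: add_pos_nonneg)
  then show ?thesis
    unfolding decay_weight_def jbr_def
    by (simp add: power_mult add_nonneg_nonneg prod_inversef[symmetric])
qed

lemma integrable_decay_weight: "integrable lborel (decay_weight :: 'c::euclidean_space \<Rightarrow> real)"
proof -
  have m: "decay_weight \<in> borel_measurable (borel :: 'c measure)"
    unfolding decay_weight_def jbr_def
    by (intro borel_measurable_continuous_onI continuous_intros) (auto simp: add_nonneg_eq_0_iff)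
  have "(\<integral>\<^sup>+z. ennreal (norm (decay_weight z)) \<partial>(lborel::'c measure))
      \<le> (\<integral>\<^sup>+z. ennreal (\<Prod>b\<in>(Basis::'c set). inverse (1 + (z \<bullet> b)\<^sup>2)) \<partial>lborel)"
    by (rule nn_integral_mono, rule ennreal_leI)
      (metis abs_of_pos decay_weight_pos decay_weight_le_prod real_norm_def)
  also have "\<dots> = (\<integral>\<^sup>+z. (\<Prod>b\<in>(Basis::'c set). ennreal (inverse (1 + (z \<bullet> b)\<^sup>2))) \<partial>lborel)"
    by (intro nn_integral_cong) (simp add: prod_ennreal add_pos_nonneg)
  also have "\<dots> = (\<Prod>b\<in>(Basis::'c set). (\<integral>\<^sup>+t. ennreal (inverse (1 + t\<^sup>2)) \<partial>lborel))"
    by (rule nn_integral_lborel_prod) auto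
  also have "\<dots> < \<infinity>"
    using integrable_inverse_1_plus_square
    by (simp add: integrable_iff_bounded add_pos_nonneg power_less_top_ennreal)
  finally show ?thesis
    using m by (simp add: integrable_iff_bounded)
qed

section \<open>Schwartz functions and symbols\<close>

lemma schwartz_decay:
  assumes "a \<in> schwartz" and "set vs \<subseteq> Basis"
  shows "\<exists>C. \<forall>x. jbr x ^ N * norm (iter_deriv vs a x) \<le> C"
  using assms unfolding schwartz_def by blast

lemma schwartz_differentiable:
  assumes "a \<in> schwartz" and "set vs \<subseteq> Basis"
  shows "iter_deriv vs a differentiable (at x)"
  using assms unfolding schwartz_def smooth_fun_def by blast

lemma continuous_on_schwartz:
  assumes "a \<in> schwartz"
  shows "continuous_on UNIV a"
  using schwartz_differentiable[OF assms, of "[]"]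
  by (intro continuous_at_imp_continuous_on ballI differentiable_imp_continuous_within) auto

lemma integrable_schwartz:
  assumes "a \<in> schwartz"
  shows "integrable lborel a"
proof -
  obtain C where C: "\<And>x. norm (a x) \<le> C * decay_weight x"
    using schwartz_decay[OF assms, of "[]" "2 * DIM('a)"] by (auto simp: jbr_power_mult_le_iff)
  show ?thesis
  proof (rule Bochner_Integration.integrable_bound)
    show "integrable lborel (\<lambda>x. C * decay_weight x)"
      by (intro integrable_mult_right integrable_decay_weight)
    show "a \<in> borel_measurable lborel"
      using borel_measurable_continuous_onI[OF continuous_on_schwartz[OF assms]] by simp
    show "AE x in lborel. norm (a x) \<le> norm (C * decay_weight x)"
      using C by (intro AE_I2) (smt (verit) real_norm_def)
  qed
qed

lemma has_vector_derivative_iter_deriv_line: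
  fixes a :: "'a::euclidean_space \<Rightarrow> complex"
  assumes "a \<in> schwartz" and "b \<in> Basis"
  shows "((\<lambda>r. iter_deriv (replicate j b) a (\<xi> + r *\<^sub>R b)) has_vector_derivative
          iter_deriv (replicate (Suc j) b) a (\<xi> + r *\<^sub>R b)) (at r)"
proof -
  let ?F = "iter_deriv (replicate j b) a" and ?p = "\<xi> + r *\<^sub>R b"
  have "?F differentiable (at ?p)"
    using assms by (intro schwartz_differentiable) auto
  then have dF: "(?F has_derivative frechet_derivative ?F (at ?p)) (at ?p)"
    by (rule frechet_derivative_works[THEN iffD1])
  have "((\<lambda>r. \<xi> + r *\<^sub>R b) has_derivative (\<lambda>t. t *\<^sub>R b)) (at r)"
    by (auto intro!: derivative_eq_intros)
  from has_derivative_compose[OF this dF]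
  have "((\<lambda>r. ?F (\<xi> + r *\<^sub>R b)) has_derivative (\<lambda>t. frechet_derivative ?F (at ?p) (t *\<^sub>R b))) (at r)"
    by (simp add: o_def)
  moreover have "frechet_derivative ?F (at ?p) (t *\<^sub>R b) = t *\<^sub>R frechet_derivative ?F (at ?p) b" for t
    using has_derivative_bounded_linear[OF dF] by (simp add: bounded_linear.linear linear_scale)
  ultimately show ?thesis
    unfolding has_vector_derivative_def by simp
qed

lemma symbol_class_inf_polynomial_bound:
  fixes c :: "'c::euclidean_space \<Rightarrow> complex"
  assumes "c \<in> symbol_class_inf"
  shows "\<exists>C M. 0 \<le> C \<and> (\<forall>z. norm (c z) \<le> C * jbr z ^ M)"
proof -
  obtain m where "c \<in> symbol_class m"
    using assms unfolding symbol_class_inf_def by blast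
  then have "\<forall>vs. set vs \<subseteq> Basis \<longrightarrow>
      (\<exists>C. \<forall>z. norm (iter_deriv vs c z) \<le> C * jbr z powr (m - real (length vs)))"
    unfolding symbol_class_def by blast
  then obtain C where C: "\<And>z. norm (c z) \<le> C * jbr z powr m"
    by (metis empty_subsetI iter_deriv.simps(1) list.size(3) set_empty diff_zero of_nat_0)
  have C0: "0 \<le> C"
  proof -
    have "0 \<le> C * jbr (0::'c) powr m"
      using C[of 0] norm_ge_zero[of "c 0"] by linarith
    moreover have "0 < jbr (0::'c) powr m"
      using jbr_pos[of "0::'c"] by simp
    ultimately show ?thesis
      by (simp add: zero_le_mult_iff)
  qed
  have "norm (c z) \<le> C * jbr z ^ nat \<lceil>m\<rceil>" for z
  proof -
    have "norm (c z) \<le> C * jbr z powr m"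
      by (rule C)
    also have "\<dots> \<le> C * jbr z powr (real (nat \<lceil>m\<rceil>))"
      using C0 jbr_ge_1[of z] by (intro mult_left_mono powr_mono) linarith+
    finally show ?thesis
      using jbr_pos[of z] by (simp add: powr_realpow)
  qed
  then show ?thesis
    using C0 by blast
qed

lemma continuous_on_symbol_class_inf:
  assumes "c \<in> symbol_class_inf"
  shows "continuous_on UNIV c"
proof -
  obtain m where "c \<in> symbol_class m"
    using assms unfolding symbol_class_inf_def by blast
  then have "\<forall>vs. set vs \<subseteq> Basis \<longrightarrow> (\<forall>x. iter_deriv vs c differentiable (at x))"
    unfolding symbol_class_def smooth_fun_def by blast
  then have "\<forall>x. iter_deriv [] c differentiable (at x)"
    by (metis empty_subsetI set_empty)
  then show ?thesis
    by (intro continuous_at_imp_continuous_on ballI differentiable_imp_continuous_within) auto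
qed

section \<open>Finite differences\<close>

lemma norm_diff_le_of_vector_derivative_bound:
  fixes f f' :: "real \<Rightarrow> 'b::real_normed_vector"
  assumes "\<And>r. (f has_vector_derivative f' r) (at r)"
    and "\<And>r. r \<in> {a..b} \<Longrightarrow> norm (f' r) \<le> B"
    and "x \<in> {a..b}" and "y \<in> {a..b}"
  shows "norm (f x - f y) \<le> B * \<bar>x - y\<bar>"
proof -
  have "norm (f x - f y) \<le> B * norm (x - y)"
  proof (rule differentiable_bound[where S="{a..b}" and f'="\<lambda>r t. t *\<^sub>R f' r"])
    show "(f has_derivative (\<lambda>t. t *\<^sub>R f' r)) (at r within {a..b})" for r
      using assms(1)[of r] unfolding has_vector_derivative_def by (rule has_derivative_at_withinI)
    show "onorm (\<lambda>t. t *\<^sub>R f' r) \<le> B" if "r \<in> {a..b}" for r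
      using assms(2)[OF that] by (simp add: onorm_scaleR_left[OF bounded_linear_ident] onorm_id)
  qed (use assms(3,4) in auto)
  then show ?thesis
    by simp
qed

lemma has_vector_derivative_translate:
  assumes "(f has_vector_derivative D) (at (r + h))"
  shows "((\<lambda>x. f (x + h)) has_vector_derivative D) (at r)"
proof -
  have "((\<lambda>x. x + h) has_vector_derivative 1) (at r)"
    by (auto intro!: derivative_eq_intros)
  from vector_diff_chain_at[OF this assms] show ?thesis
    by (simp add: o_def)
qed

text \<open>\<open>fin_diff k h f\<close> is \<open>((I - T\<^sub>h)\<^sup>k f)(0)\<close>, where \<open>(T\<^sub>h f)(r) = f (r + h)\<close>.\<close>

fun fin_diff :: "nat \<Rightarrow> real \<Rightarrow> (real \<Rightarrow> 'b::ab_group_add) \<Rightarrow> 'b" where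
  "fin_diff 0 h f = f 0"
| "fin_diff (Suc k) h f = fin_diff k h (\<lambda>r. f r - f (r + h))"

lemma norm_fin_diff_le:
  fixes f :: "nat \<Rightarrow> real \<Rightarrow> 'b::real_normed_vector"
  assumes "\<And>j r. j < k \<Longrightarrow> (f j has_vector_derivative f (Suc j) r) (at r)"
    and "\<And>r. \<bar>r\<bar> \<le> real k * \<bar>h\<bar> \<Longrightarrow> norm (f k r) \<le> M"
  shows "norm (fin_diff k h (f 0)) \<le> M * \<bar>h\<bar> ^ k"
  using assms
proof (induction k arbitrary: f M)
  case 0
  then show ?case
    by simp
next
  case (Suc k)
  define g where "g j r = f j r - f j (r + h)" for j r
  have "norm (fin_diff k h (g 0)) \<le> (M * \<bar>h\<bar>) * \<bar>h\<bar> ^ k"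
  proof (rule Suc.IH)
    show "(g j has_vector_derivative g (Suc j) r) (at r)" if "j < k" for j r
      unfolding g_def using that
      by (intro has_vector_derivative_diff has_vector_derivative_translate Suc.prems(1)) simp_all
  next
    fix r
    assume r: "\<bar>r\<bar> \<le> real k * \<bar>h\<bar>"
    let ?a = "- (real (Suc k) * \<bar>h\<bar>)" and ?b = "real (Suc k) * \<bar>h\<bar>"
    have "norm (f k r - f k (r + h)) \<le> M * \<bar>r - (r + h)\<bar>"
    proof (rule norm_diff_le_of_vector_derivative_bound[where a="?a" and b="?b"])
      show "(f k has_vector_derivative f (Suc k) \<rho>) (at \<rho>)" for \<rho>
        using Suc.prems(1)[of k] by simp
      show "norm (f (Suc k) \<rho>) \<le> M" if "\<rho> \<in> {?a..?b}" for \<rho>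
        using that by (intro Suc.prems(2)) auto
    qed (use r in \<open>auto simp: algebra_simps\<close>)
    then show "norm (g k r) \<le> M * \<bar>h\<bar>"
      by (simp add: g_def)
  qed
  moreover have "fin_diff (Suc k) h (f 0) = fin_diff k h (g 0)"
    by (simp add: g_def[abs_def])
  ultimately show ?case
    by (simp add: algebra_simps)
qed

section \<open>Decay of the Fourier integral\<close>

lemma
  fixes g :: "'a::euclidean_space \<Rightarrow> complex"
  assumes "integrable lborel g"
  shows integrable_lborel_translate: "integrable lborel (\<lambda>\<xi>. g (v + \<xi>))"
    and integral_lborel_translate: "(LINT \<xi>|lborel. g (v + \<xi>)) = (LINT \<xi>|lborel. g \<xi>)"
proof -
  have gm: "g \<in> borel_measurable borel"
    using borel_measurable_integrable[OF assms] by simp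
  have pm: "(+) v \<in> measurable lborel borel"
    by simp
  have "integrable (distr lborel borel ((+) v)) g"
    using assms by (simp add: lborel_distr_plus)
  then show "integrable lborel (\<lambda>\<xi>. g (v + \<xi>))"
    using integrable_distr_eq[OF pm gm] by simp
  have "(LINT \<xi>|lborel. g (v + \<xi>)) = integral\<^sup>L (distr lborel borel ((+) v)) g"
    using integral_distr[OF pm gm] by simp
  then show "(LINT \<xi>|lborel. g (v + \<xi>)) = (LINT \<xi>|lborel. g \<xi>)"
    by (simp add: lborel_distr_plus)
qed

definition plane_wave :: "'a::euclidean_space \<Rightarrow> 'a \<Rightarrow> complex" where
  "plane_wave w \<xi> = exp (\<i> * complex_of_real (w \<bullet> \<xi>))"

definition fourier_integral :: "('a::euclidean_space \<Rightarrow> complex) \<Rightarrow> 'a \<Rightarrow> complex" where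
  "fourier_integral a w = (LINT \<xi>|lborel. plane_wave w \<xi> * a \<xi>)"

lemma norm_plane_wave [simp]: "norm (plane_wave w \<xi>) = 1"
  unfolding plane_wave_def by (simp add: norm_exp_i_times)

lemma plane_wave_translate_half_period:
  assumes "(w \<bullet> b) * h = pi"
  shows "plane_wave w (\<eta> - h *\<^sub>R b) = - plane_wave w \<eta>"
proof -
  have "plane_wave w (\<eta> - h *\<^sub>R b) = plane_wave w \<eta> * exp (- (\<i> * complex_of_real pi))"
    unfolding plane_wave_def using assms
    by (simp add: inner_diff_right exp_add[symmetric] algebra_simps mult.commute)
  also have "exp (- (\<i> * complex_of_real pi)) = -1"
    by (simp add: exp_minus mult.commute exp_pi_i)
  finally show ?thesis
    by simp
qed

lemma integrable_plane_wave_mult: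
  assumes "integrable lborel g"
  shows "integrable lborel (\<lambda>\<xi>. plane_wave w \<xi> * g \<xi>)"
proof (rule Bochner_Integration.integrable_bound[OF assms])
  have "plane_wave w \<in> borel_measurable borel"
    unfolding plane_wave_def by (intro borel_measurable_continuous_onI continuous_intros)
  then show "(\<lambda>\<xi>. plane_wave w \<xi> * g \<xi>) \<in> borel_measurable lborel"
    using borel_measurable_integrable[OF assms] by simp
qed (simp add: norm_mult)

lemma norm_fourier_integral_le: "norm (fourier_integral a w) \<le> (LINT \<xi>|lborel. norm (a \<xi>))"
  unfolding fourier_integral_def
  using integral_norm_bound[of lborel "\<lambda>\<xi>. plane_wave w \<xi> * a \<xi>"] by (simp add: norm_mult)

lemma fourier_integral_translate_half_period:
  assumes g: "integrable lborel g" and wh: "(w \<bullet> b) * h = pi"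
  shows "fourier_integral (\<lambda>\<xi>. g (\<xi> + h *\<^sub>R b)) w = - fourier_integral g w"
proof -
  let ?F = "\<lambda>\<eta>. plane_wave w (\<eta> - h *\<^sub>R b) * g \<eta>"
  have Fi: "integrable lborel ?F"
    unfolding plane_wave_translate_half_period[OF wh] using integrable_plane_wave_mult[OF g] by simp
  have "fourier_integral (\<lambda>\<xi>. g (\<xi> + h *\<^sub>R b)) w = (LINT \<xi>|lborel. ?F (h *\<^sub>R b + \<xi>))"
    unfolding fourier_integral_def by (simp add: add.commute)
  also have "\<dots> = (LINT \<xi>|lborel. ?F \<xi>)"
    by (rule integral_lborel_translate[OF Fi])
  also have "\<dots> = - fourier_integral g w"
    unfolding plane_wave_translate_half_period[OF wh] fourier_integral_def by simp
  finally show ?thesis .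
qed

lemma fin_diff_fourier_integral:
  fixes g :: "'a::euclidean_space \<Rightarrow> complex"
  assumes wh: "(w \<bullet> b) * h = pi"
  shows "integrable lborel g \<Longrightarrow>
    integrable lborel (\<lambda>\<xi>. fin_diff k h (\<lambda>r. g (\<xi> + r *\<^sub>R b))) \<and>
    fourier_integral (\<lambda>\<xi>. fin_diff k h (\<lambda>r. g (\<xi> + r *\<^sub>R b))) w = 2 ^ k * fourier_integral g w"
proof (induction k arbitrary: g)
  case 0
  then show ?case
    by simp
next
  case (Suc k)
  define g' where "g' \<zeta> = g \<zeta> - g (\<zeta> + h *\<^sub>R b)" for \<zeta>
  have gs: "integrable lborel (\<lambda>\<zeta>. g (\<zeta> + h *\<^sub>R b))"
    using integrable_lborel_translate[OF Suc.prems, of "h *\<^sub>R b"] by (simp add: add.commute)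
  have g'i: "integrable lborel g'"
    unfolding g'_def using Suc.prems gs by simp
  have "fourier_integral g' w = fourier_integral g w - fourier_integral (\<lambda>\<zeta>. g (\<zeta> + h *\<^sub>R b)) w"
    unfolding g'_def fourier_integral_def right_diff_distrib
    using integrable_plane_wave_mult[OF Suc.prems] integrable_plane_wave_mult[OF gs] by simp
  also have "\<dots> = 2 * fourier_integral g w"
    using fourier_integral_translate_half_period[OF Suc.prems wh] by simp
  finally have "fourier_integral g' w = 2 * fourier_integral g w" .
  moreover have "fin_diff (Suc k) h (\<lambda>r. g (\<xi> + r *\<^sub>R b)) = fin_diff k h (\<lambda>r. g' (\<xi> + r *\<^sub>R b))" for \<xi>
    by (simp add: g'_def scaleR_left_distrib add.assoc)
  ultimately show ?case
    using Suc.IH[OF g'i] by simp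
qed

lemma schwartz_fin_diff_line_bound:
  fixes a :: "'a::euclidean_space \<Rightarrow> complex"
  assumes a: "a \<in> schwartz" and b: "b \<in> Basis" and H: "0 \<le> H"
  shows "\<exists>K. \<forall>h \<xi>. \<bar>h\<bar> \<le> H \<longrightarrow>
    norm (fin_diff k h (\<lambda>r. a (\<xi> + r *\<^sub>R b))) \<le> K * decay_weight \<xi> * \<bar>h\<bar> ^ k"
proof -
  define N where "N = 2 * DIM('a)"
  define P where "P = sqrt 2 * (1 + real k * H)"
  have P0: "0 \<le> P"
    unfolding P_def using H by simp
  have "set (replicate k b) \<subseteq> Basis"
    using b by (simp add: set_replicate_conv_if)
  then obtain C where C: "\<And>x. jbr x ^ N * norm (iter_deriv (replicate k b) a x) \<le> C"
    using schwartz_decay[OF a, of "replicate k b" N] by blast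
  have "norm (fin_diff k h (\<lambda>r. a (\<xi> + r *\<^sub>R b))) \<le> P ^ N * C * decay_weight \<xi> * \<bar>h\<bar> ^ k"
    if h: "\<bar>h\<bar> \<le> H" for h \<xi>
  proof -
    define f where "f j r = iter_deriv (replicate j b) a (\<xi> + r *\<^sub>R b)" for j r
    have "norm (fin_diff k h (f 0)) \<le> (P ^ N * C * decay_weight \<xi>) * \<bar>h\<bar> ^ k"
    proof (rule norm_fin_diff_le)
      show "(f j has_vector_derivative f (Suc j) r) (at r)" for j r
        unfolding f_def by (rule has_vector_derivative_iter_deriv_line[OF a b])
    next
      fix r
      assume r: "\<bar>r\<bar> \<le> real k * \<bar>h\<bar>"
      let ?\<zeta> = "\<xi> + r *\<^sub>R b"
      have "real k * \<bar>h\<bar> \<le> real k * H"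
        using h by (simp add: mult_left_mono)
      then have "1 + norm (r *\<^sub>R b) \<le> 1 + real k * H"
        using r b by simp
      then have "sqrt 2 * (1 + norm (r *\<^sub>R b)) * jbr ?\<zeta> \<le> P * jbr ?\<zeta>"
        unfolding P_def using jbr_pos[of ?\<zeta>] by (intro mult_right_mono mult_left_mono) auto
      with jbr_le_translate[of \<xi> "r *\<^sub>R b"] have "jbr \<xi> \<le> P * jbr ?\<zeta>"
        by linarith
      then have "jbr \<xi> ^ N \<le> P ^ N * jbr ?\<zeta> ^ N"
        using jbr_pos[of \<xi>] by (simp add: power_mono flip: power_mult_distrib)
      from mult_right_mono[OF this norm_ge_zero]
      have "jbr \<xi> ^ N * norm (f k r) \<le> P ^ N * (jbr ?\<zeta> ^ N * norm (f k r))"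
        by (simp add: mult.assoc)
      also have "\<dots> \<le> P ^ N * C"
        using C[of ?\<zeta>] P0 unfolding f_def by (intro mult_left_mono) auto
      finally show "norm (f k r) \<le> P ^ N * C * decay_weight \<xi>"
        unfolding N_def jbr_power_mult_le_iff .
    qed
    moreover have "f 0 = (\<lambda>r. a (\<xi> + r *\<^sub>R b))"
      by (simp add: f_def[abs_def])
    ultimately show ?thesis
      by simp
  qed
  then show ?thesis
    by blast
qed

lemma fourier_integral_decay_along:
  fixes a :: "'a::euclidean_space \<Rightarrow> complex"
  assumes a: "a \<in> schwartz" and b: "b \<in> Basis"
  shows "\<exists>C. \<forall>w. 1 \<le> \<bar>w \<bullet> b\<bar> \<longrightarrow> \<bar>w \<bullet> b\<bar> ^ k * norm (fourier_integral a w) \<le> C"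
proof -
  obtain K where K: "\<And>h \<xi>. \<bar>h\<bar> \<le> pi \<Longrightarrow>
      norm (fin_diff k h (\<lambda>r. a (\<xi> + r *\<^sub>R b))) \<le> K * decay_weight \<xi> * \<bar>h\<bar> ^ k"
    using schwartz_fin_diff_line_bound[OF a b, of pi k] by auto
  define W where "W = (LINT \<xi>|lborel. decay_weight (\<xi>::'a))"
  have "\<bar>w \<bullet> b\<bar> ^ k * norm (fourier_integral a w) \<le> K * W * (pi / 2) ^ k"
    if w: "1 \<le> \<bar>w \<bullet> b\<bar>" for w
  proof -
    define h where "h = pi / (w \<bullet> b)"
    have wh: "(w \<bullet> b) * h = pi"
      using w by (auto simp: h_def)
    then have whabs: "\<bar>w \<bullet> b\<bar> * \<bar>h\<bar> = pi"
      by (metis abs_mult abs_of_nonneg pi_ge_zero)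
    moreover have "\<bar>h\<bar> \<le> \<bar>w \<bullet> b\<bar> * \<bar>h\<bar>"
      using w by (simp add: mult_le_cancel_right1)
    ultimately have "\<bar>h\<bar> \<le> pi"
      by simp
    define d where "d \<xi> = fin_diff k h (\<lambda>r. a (\<xi> + r *\<^sub>R b))" for \<xi>
    from fin_diff_fourier_integral[OF wh integrable_schwartz[OF a], of k]
    have "integrable lborel d" and "fourier_integral d w = 2 ^ k * fourier_integral a w"
      by (simp_all add: d_def[abs_def])
    then have "2 ^ k * norm (fourier_integral a w) = norm (fourier_integral d w)"
      by (simp add: norm_mult norm_power)
    also have "\<dots> \<le> (LINT \<xi>|lborel. norm (d \<xi>))"
      by (rule norm_fourier_integral_le)
    also have "\<dots> \<le> (LINT \<xi>|lborel. K * \<bar>h\<bar> ^ k * decay_weight (\<xi>::'a))"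
      by (rule Bochner_Integration.integral_mono)
        (use \<open>integrable lborel d\<close> K[OF \<open>\<bar>h\<bar> \<le> pi\<close>, folded d_def] in
          \<open>auto intro!: integrable_norm integrable_mult_right integrable_decay_weight simp: mult_ac\<close>)
    also have "\<dots> = K * \<bar>h\<bar> ^ k * W"
      by (simp add: W_def)
    finally have "\<bar>w \<bullet> b\<bar> ^ k * (2 ^ k * norm (fourier_integral a w))
        \<le> \<bar>w \<bullet> b\<bar> ^ k * (K * \<bar>h\<bar> ^ k * W)"
      by (simp add: mult_left_mono)
    also have "\<dots> = K * W * (\<bar>w \<bullet> b\<bar> * \<bar>h\<bar>) ^ k"
      by (simp add: power_mult_distrib mult_ac)
    also have "\<dots> = K * W * pi ^ k"
      using whabs by simp
    finally show ?thesis
      by (simp add: field_simps power_divide)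
  qed
  then show ?thesis
    by blast
qed

lemma exists_Basis_norm_le_DIM_mult_inner:
  fixes w :: "'a::euclidean_space"
  shows "\<exists>b\<in>Basis. norm w \<le> real DIM('a) * \<bar>w \<bullet> b\<bar>"
proof -
  let ?m = "Max ((\<lambda>b. \<bar>w \<bullet> b\<bar>) ` (Basis :: 'a set))"
  have "?m \<in> (\<lambda>b. \<bar>w \<bullet> b\<bar>) ` Basis"
    by (rule Max_in) auto
  then obtain b where b: "b \<in> Basis" "?m = \<bar>w \<bullet> b\<bar>"
    by (rule imageE) simp
  have "norm w \<le> (\<Sum>b\<in>Basis. \<bar>w \<bullet> b\<bar>)"
    by (rule norm_le_l1)
  also have "\<dots> \<le> real DIM('a) * ?m"
    by (rule sum_bounded_above) auto
  finally show ?thesis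
    using b by auto
qed

lemma fourier_integral_decay:
  fixes a :: "'a::euclidean_space \<Rightarrow> complex"
  assumes a: "a \<in> schwartz"
  shows "\<exists>C. \<forall>w. jbr w ^ k * norm (fourier_integral a w) \<le> C"
proof -
  let ?F = "\<lambda>w. norm (fourier_integral a w)"
  have "\<forall>b\<in>Basis. \<exists>C. \<forall>w. 1 \<le> \<bar>w \<bullet> b\<bar> \<longrightarrow> \<bar>w \<bullet> b\<bar> ^ k * ?F w \<le> C"
    using fourier_integral_decay_along[OF a] by blast
  then obtain Cb where Cb: "\<And>b w. b \<in> Basis \<Longrightarrow> 1 \<le> \<bar>w \<bullet> b\<bar> \<Longrightarrow> \<bar>w \<bullet> b\<bar> ^ k * ?F w \<le> Cb b"
    by metis
  define C where "C = (\<Sum>b\<in>(Basis::'a set). \<bar>Cb b\<bar>) + (LINT \<xi>|lborel. norm (a \<xi>))"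
  define n where "n = real DIM('a)"
  have n1: "1 \<le> n"
    unfolding n_def by (simp add: DIM_positive Suc_le_eq)
  have "jbr w ^ k * ?F w \<le> (n + 1) ^ k * C" for w
  proof -
    obtain b where b: "b \<in> Basis" "norm w \<le> n * \<bar>w \<bullet> b\<bar>"
      using exists_Basis_norm_le_DIM_mult_inner[of w] n_def by auto
    have "\<bar>Cb b\<bar> \<le> (\<Sum>b\<in>Basis. \<bar>Cb b\<bar>)"
      using b(1) by (intro member_le_sum) auto
    moreover have "0 \<le> (\<Sum>b\<in>(Basis::'a set). \<bar>Cb b\<bar>)" and "0 \<le> (LINT \<xi>|lborel. norm (a \<xi>))"
      by (simp_all add: sum_nonneg)
    ultimately have Cb_le: "Cb b \<le> C" and F_le: "?F w \<le> C"
      using norm_fourier_integral_le[of a w] unfolding C_def by linarith+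
    show ?thesis
    proof (cases "1 \<le> \<bar>w \<bullet> b\<bar>")
      case True
      have "jbr w \<le> (n + 1) * \<bar>w \<bullet> b\<bar>"
        using jbr_le_1_plus_norm[of w] b(2) True by (simp add: algebra_simps)
      then have "jbr w ^ k * ?F w \<le> ((n + 1) * \<bar>w \<bullet> b\<bar>) ^ k * ?F w"
        using jbr_pos[of w] by (intro mult_right_mono power_mono) auto
      also have "\<dots> = (n + 1) ^ k * (\<bar>w \<bullet> b\<bar> ^ k * ?F w)"
        by (simp add: power_mult_distrib)
      also have "\<dots> \<le> (n + 1) ^ k * C"
        using Cb[OF b(1) True] Cb_le n1 by (intro mult_left_mono) auto
      finally show ?thesis .
    next
      case False
      have "n * \<bar>w \<bullet> b\<bar> \<le> n"
        using False n1 by (simp add: mult_left_le)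
      then have "jbr w \<le> n + 1"
        using jbr_le_1_plus_norm[of w] b(2) by linarith
      then have "jbr w ^ k \<le> (n + 1) ^ k"
        using jbr_pos[of w] by (intro power_mono) auto
      then show ?thesis
        using F_le n1 by (intro mult_mono) auto
    qed
  qed
  then show ?thesis
    by blast
qed

lemma inv_fourier_eq:
  fixes a :: "'a::euclidean_space \<Rightarrow> complex"
  shows "inv_fourier a = (\<lambda>w. fourier_integral a w / complex_of_real ((2 * pi) ^ DIM('a)))"
  unfolding inv_fourier_def fourier_integral_def plane_wave_def by simp

lemma inv_fourier_decay:
  fixes a :: "'a::euclidean_space \<Rightarrow> complex"
  assumes "a \<in> schwartz"
  shows "\<exists>C. \<forall>w. jbr w ^ k * norm (inv_fourier a w) \<le> C"
proof -
  obtain C where "\<And>w. jbr w ^ k * norm (fourier_integral a w) \<le> C"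
    using fourier_integral_decay[OF assms] by blast
  moreover have "jbr w ^ k * norm (inv_fourier a w)
      = jbr w ^ k * norm (fourier_integral a w) / (2 * pi) ^ DIM('a)" for w
    unfolding inv_fourier_eq by (simp add: norm_divide norm_mult norm_power)
  ultimately have "jbr w ^ k * norm (inv_fourier a w) \<le> C / (2 * pi) ^ DIM('a)" for w
    by (simp add: divide_right_mono)
  then show ?thesis
    by blast
qed

lemma continuous_on_fourier_integral:
  assumes "integrable lborel a"
  shows "continuous_on UNIV (fourier_integral a)"
proof (rule continuous_on_sequentiallyI)
  fix u and w0 :: 'a
  assume u: "u \<longlonglongrightarrow> w0"
  show "(\<lambda>n. fourier_integral a (u n)) \<longlonglongrightarrow> fourier_integral a w0"
    unfolding fourier_integral_def
  proof (rule integral_dominated_convergence[where w="\<lambda>\<xi>. norm (a \<xi>)"])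
    show "AE \<xi> in lborel. (\<lambda>n. plane_wave (u n) \<xi> * a \<xi>) \<longlonglongrightarrow> plane_wave w0 \<xi> * a \<xi>"
      unfolding plane_wave_def by (intro AE_I2 tendsto_intros u)
  qed (use assms integrable_plane_wave_mult[OF assms] in \<open>auto simp: norm_mult\<close>)
qed

lemma continuous_on_inv_fourier:
  assumes "a \<in> schwartz"
  shows "continuous_on UNIV (inv_fourier a)"
  unfolding inv_fourier_eq
  using continuous_on_fourier_integral[OF integrable_schwartz[OF assms]]
  by (intro continuous_intros) auto

lemma eventually_nhds_norm_le_add_1:
  fixes x0 :: "'a::real_normed_vector"
  shows "\<forall>\<^sub>F x in nhds x0. norm x \<le> norm x0 + 1"
  unfolding eventually_nhds_metric
proof (intro exI[of _ 1] conjI allI impI)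
  fix x :: 'a
  assume "dist x x0 < 1"
  then show "norm x \<le> norm x0 + 1"
    using norm_triangle_ineq2[of x x0] by (simp add: dist_norm)
qed simp

section \<open>Dominated convergence in \<open>L\<^sup>2\<close>\<close>

lemma integral_dominated_convergence_at:
  fixes s :: "'b::first_countable_topology \<Rightarrow> 'a \<Rightarrow> 'c::{banach, second_countable_topology}"
  assumes "f \<in> borel_measurable M" and "\<And>t. s t \<in> borel_measurable M" and "integrable M w"
    and lim: "AE x in M. ((\<lambda>t. s t x) \<longlongrightarrow> f x) (at t0)"
    and bound: "\<forall>\<^sub>F t in at t0. AE x in M. norm (s t x) \<le> w x"
  shows "((\<lambda>t. integral\<^sup>L M (s t)) \<longlongrightarrow> integral\<^sup>L M f) (at t0)"
proof (rule tendsto_at_iff_sequentially[THEN iffD2], intro allI impI)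
  fix X :: "nat \<Rightarrow> 'b"
  assume "\<forall>i. X i \<in> UNIV - {t0}" and "X \<longlonglongrightarrow> t0"
  then have X: "filterlim X (at t0) sequentially"
    by (simp add: filterlim_at)
  from filterlim_iff[THEN iffD1, OF X, rule_format, OF bound]
  obtain N where w: "\<And>n. N \<le> n \<Longrightarrow> AE x in M. norm (s (X n) x) \<le> w x"
    by (auto simp: eventually_sequentially)
  show "((\<lambda>t. integral\<^sup>L M (s t)) \<circ> X) \<longlonglongrightarrow> integral\<^sup>L M f"
    unfolding o_def
  proof (rule LIMSEQ_offset, rule integral_dominated_convergence)
    show "AE x in M. norm (s (X (n + N)) x) \<le> w x" for n
      by (rule w) auto
    show "AE x in M. (\<lambda>n. s (X (n + N)) x) \<longlonglongrightarrow> f x"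
      using lim
    proof eventually_elim
      fix x
      assume "((\<lambda>t. s t x) \<longlongrightarrow> f x) (at t0)"
      then show "(\<lambda>n. s (X (n + N)) x) \<longlonglongrightarrow> f x"
        by (intro LIMSEQ_ignore_initial_segment filterlim_compose[OF _ X])
    qed
  qed fact+
qed

lemma tendsto_L2_dist_dominated:
  fixes F :: "'b::first_countable_topology \<Rightarrow> 'c::euclidean_space \<Rightarrow> complex"
  assumes meas: "\<And>t. F t \<in> borel_measurable lborel"
    and lim: "\<And>z. ((\<lambda>t. F t z) \<longlongrightarrow> F t0 z) (at t0)"
    and g: "integrable lborel g"
    and bound: "\<forall>\<^sub>F t in nhds t0. \<forall>z. (norm (F t z))\<^sup>2 \<le> g z"
  shows "((\<lambda>t. L2_dist (F t) (F t0)) \<longlongrightarrow> 0) (at t0)"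
proof -
  have bound0: "(norm (F t0 z))\<^sup>2 \<le> g z" for z
    using eventually_nhds_x_imp_x[OF bound] by blast
  have diff_bound: "(norm (F t z - F t0 z))\<^sup>2 \<le> 4 * g z"
    if "(norm (F t z))\<^sup>2 \<le> g z" for t z
  proof -
    have "(norm (F t z - F t0 z))\<^sup>2 \<le> (norm (F t z) + norm (F t0 z))\<^sup>2"
      by (simp add: norm_triangle_ineq4 power_mono)
    also have "\<dots> \<le> 2 * (norm (F t z))\<^sup>2 + 2 * (norm (F t0 z))\<^sup>2"
      using sum_squares_bound[of "norm (F t z)" "norm (F t0 z)"] by (simp add: power2_sum)
    finally show ?thesis
      using that bound0[of z] by simp
  qed
  have "((\<lambda>t. LINT z|lborel. (norm (F t z - F t0 z))\<^sup>2) \<longlongrightarrow> (LINT (z::'c)|lborel. 0)) (at t0)"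
  proof (rule integral_dominated_convergence_at[where w="\<lambda>z. 4 * g z"])
    show "AE z in lborel. ((\<lambda>t. (norm (F t z - F t0 z))\<^sup>2) \<longlongrightarrow> 0) (at t0)"
    proof (rule AE_I2)
      fix z
      have "((\<lambda>t. norm (F t z - F t0 z)) \<longlongrightarrow> 0) (at t0)"
        using LIM_zero[OF lim[of z]] by (rule tendsto_norm_zero)
      from tendsto_power[OF this, of 2] show "((\<lambda>t. (norm (F t z - F t0 z))\<^sup>2) \<longlongrightarrow> 0) (at t0)"
        by simp
    qed
    show "\<forall>\<^sub>F t in at t0. AE z in lborel. norm ((norm (F t z - F t0 z))\<^sup>2) \<le> 4 * g z"
      using bound unfolding eventually_at_filter
      by (rule eventually_mono) (auto intro!: AE_I2 diff_bound)
  qed (use meas g in auto)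
  from tendsto_real_sqrt[OF this] show ?thesis
    unfolding L2_dist_def by simp
qed

section \<open>The kernel\<close>

lemma jbr_Pair_le_kernel_arguments:
  fixes \<tau> :: "'a::real_normed_vector \<Rightarrow>\<^sub>L 'a"
  assumes "norm \<tau> \<le> R" and "1 \<le> R"
  shows "jbr (x, y) \<le> sqrt 6 * R * jbr (x - \<tau> x + \<tau> y) * jbr (x - y) ^ 2"
proof -
  let ?u = "x - y" and ?w = "x - \<tau> x + \<tau> y"
  have "norm (\<tau> ?u) \<le> R * norm ?u"
    using norm_blinfun[of \<tau> ?u] mult_right_mono[OF assms(1) norm_ge_zero[of ?u]] by linarith
  then have "jbr (\<tau> ?u) \<le> R * jbr ?u"
    using assms(2) by (rule jbr_le_scale)
  moreover have "jbr x \<le> sqrt 2 * jbr ?w * jbr (\<tau> ?u)"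
    using jbr_add_le[of ?w "\<tau> ?u"] by (simp add: blinfun.diff_right)
  ultimately have x: "jbr x \<le> sqrt 2 * R * jbr ?w * jbr ?u"
    using jbr_pos[of ?w] by (smt (verit) mult_left_mono mult.assoc mult.commute real_sqrt_ge_zero)
  have sqrt_6: "sqrt 6 = sqrt 3 * sqrt 2"
    by (simp flip: real_sqrt_mult)
  have "jbr (x, y) \<le> sqrt 3 * jbr x * jbr ?u"
    by (rule jbr_Pair_le)
  also have "\<dots> \<le> sqrt 3 * (sqrt 2 * R * jbr ?w * jbr ?u) * jbr ?u"
    using x jbr_pos[of ?u] by (intro mult_right_mono mult_left_mono) auto
  also have "\<dots> = sqrt 6 * R * jbr ?w * jbr ?u ^ 2"
    unfolding sqrt_6 by (simp only: power2_eq_square mult_ac)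
  finally show ?thesis .
qed

lemma kernelK_decay:
  fixes a :: "'a::euclidean_space \<Rightarrow> complex"
  assumes a: "a \<in> schwartz" and b: "b \<in> schwartz" and c: "c \<in> symbol_class_inf"
  shows "\<exists>G. \<forall>\<tau> z. norm \<tau> \<le> R \<longrightarrow> jbr z ^ N * norm (kernelK a b c \<tau> z) \<le> G"
proof -
  obtain Cc M where Cc0: "0 \<le> Cc" and Cc: "\<And>z. norm (c z) \<le> Cc * jbr z ^ M"
    using symbol_class_inf_polynomial_bound[OF c] by blast
  define L where "L = N + M"
  obtain A where A: "\<And>w. jbr w ^ L * norm (inv_fourier a w) \<le> A"
    using inv_fourier_decay[OF a] by blast
  obtain B where B: "\<And>u. jbr u ^ (2 * L) * norm (b u) \<le> B"
    using schwartz_decay[OF b, of "[]"] by auto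
  have A0: "0 \<le> A" and B0: "0 \<le> B"
    using A[of 0] B[of 0] jbr_pos[of "0::'a"] by (smt (verit) norm_ge_zero zero_le_mult_iff zero_le_power)+
  define S where "S = sqrt 6 * max 1 R"
  have "jbr z ^ N * norm (kernelK a b c \<tau> z) \<le> Cc * (S ^ L * (A * B))" if \<tau>: "norm \<tau> \<le> R" for \<tau> z
  proof -
    obtain x y where z: "z = (x, y)"
      by (cases z)
    define u where "u = x - y"
    define w where "w = x - \<tau> x + \<tau> y"
    let ?bu = "norm (b u)" and ?Fw = "norm (inv_fourier a w)"
    have "jbr z \<le> S * jbr w * jbr u ^ 2"
      using jbr_Pair_le_kernel_arguments[of \<tau> "max 1 R" x y] \<tau>
      unfolding z S_def u_def w_def by (simp add: mult.assoc)
    then have "jbr z ^ L \<le> (S * jbr w * jbr u ^ 2) ^ L"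
      using jbr_pos[of z] by (intro power_mono) auto
    then have Z: "jbr z ^ L \<le> S ^ L * (jbr w ^ L * jbr u ^ (2 * L))"
      by (simp add: power_mult_distrib power_mult[symmetric] mult.commute)
    have "jbr z ^ N * norm (kernelK a b c \<tau> z) = jbr z ^ N * norm (c z) * (?bu * ?Fw)"
      by (simp add: kernelK_def z u_def w_def norm_mult)
    also have "\<dots> \<le> jbr z ^ N * (Cc * jbr z ^ M) * (?bu * ?Fw)"
      using Cc[of z] jbr_pos[of z] by (intro mult_right_mono mult_left_mono) auto
    also have "\<dots> = Cc * (jbr z ^ L * (?bu * ?Fw))"
      by (simp add: L_def power_add mult_ac)
    also have "\<dots> \<le> Cc * (S ^ L * (jbr w ^ L * jbr u ^ (2 * L)) * (?bu * ?Fw))"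
      using Z Cc0 by (intro mult_left_mono mult_right_mono) auto
    also have "\<dots> = Cc * (S ^ L * ((jbr w ^ L * ?Fw) * (jbr u ^ (2 * L) * ?bu)))"
      by (simp add: mult_ac)
    also have "\<dots> \<le> Cc * (S ^ L * (A * B))"
      using A[of w] B[of u] A0 B0 Cc0 jbr_pos[of w] jbr_pos[of u] unfolding S_def
      by (intro mult_left_mono mult_mono) auto
    finally show ?thesis .
  qed
  then show ?thesis
    by blast
qed

lemma kernelK_square_bound:
  fixes a :: "'a::euclidean_space \<Rightarrow> complex"
  assumes "a \<in> schwartz" and "b \<in> schwartz" and "c \<in> symbol_class_inf"
  shows "\<exists>G. \<forall>\<tau> z. norm \<tau> \<le> R \<longrightarrow> (norm (kernelK a b c \<tau> z))\<^sup>2 \<le> G * decay_weight z"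
proof -
  obtain G where G: "\<And>\<tau> z. norm \<tau> \<le> R \<Longrightarrow> jbr z ^ DIM('a \<times> 'a) * norm (kernelK a b c \<tau> z) \<le> G"
    using kernelK_decay[OF assms, where R=R and N="DIM('a \<times> 'a)"] by blast
  have "(norm (kernelK a b c \<tau> z))\<^sup>2 \<le> G\<^sup>2 * decay_weight z" if "norm \<tau> \<le> R" for \<tau> z
  proof -
    let ?D = "DIM('a \<times> 'a)" and ?k = "norm (kernelK a b c \<tau> z)"
    have "jbr z ^ (2 * ?D) * ?k\<^sup>2 = (jbr z ^ ?D * ?k)\<^sup>2"
      by (simp only: power_mult_distrib power_mult[symmetric] mult.commute[of ?D 2])
    also have "\<dots> \<le> G\<^sup>2"
      using G[OF that] jbr_pos[of z] by (intro power_mono) auto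
    finally show ?thesis
      by (simp only: jbr_power_mult_le_iff)
  qed
  then show ?thesis
    by blast
qed

lemma continuous_on_kernelK:
  assumes "a \<in> schwartz" and "b \<in> schwartz" and "c \<in> symbol_class_inf"
  shows "continuous_on UNIV (kernelK a b c \<tau>)"
proof -
  have "kernelK a b c \<tau> = (\<lambda>z. c z * b (fst z - snd z) * inv_fourier a (fst z - \<tau> (fst z) + \<tau> (snd z)))"
    by (auto simp: kernelK_def fun_eq_iff split: prod.splits)
  then show ?thesis
    by (simp, intro continuous_intros continuous_on_compose2[OF continuous_on_schwartz[OF assms(2)]]
        continuous_on_compose2[OF continuous_on_inv_fourier[OF assms(1)]]
        continuous_on_symbol_class_inf[OF assms(3)]) auto
qed

lemma kernelK_measurable:
  assumes "a \<in> schwartz" and "b \<in> schwartz" and "c \<in> symbol_class_inf"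
  shows "kernelK a b c \<tau> \<in> borel_measurable lborel"
  using borel_measurable_continuous_onI[OF continuous_on_kernelK[OF assms]] by simp

lemma L2_kernelK:
  assumes "a \<in> schwartz" and "b \<in> schwartz" and "c \<in> symbol_class_inf"
  shows "L2 (kernelK a b c \<tau>)"
  unfolding L2_def
proof
  obtain G where G: "\<And>z. (norm (kernelK a b c \<tau> z))\<^sup>2 \<le> G * decay_weight z"
    using kernelK_square_bound[OF assms, of "norm \<tau>"] by blast
  show m: "kernelK a b c \<tau> \<in> borel_measurable lborel"
    by (rule kernelK_measurable[OF assms])
  show "integrable lborel (\<lambda>z. (norm (kernelK a b c \<tau> z))\<^sup>2)"
  proof (rule Bochner_Integration.integrable_bound)
    show "integrable lborel (\<lambda>z. G * decay_weight z)"
      by (intro integrable_mult_right integrable_decay_weight)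
    show "AE z in lborel. norm ((norm (kernelK a b c \<tau> z))\<^sup>2) \<le> norm (G * decay_weight z)"
      using G by (intro AE_I2) (smt (verit) real_norm_def zero_le_power2)
  qed (use m in measurable)
qed

lemma tendsto_kernelK_param:
  fixes a :: "'a::euclidean_space \<Rightarrow> complex" and \<tau>0 :: "'a \<Rightarrow>\<^sub>L 'a"
  assumes "a \<in> schwartz"
  shows "((\<lambda>\<tau>. kernelK a b c \<tau> z) \<longlongrightarrow> kernelK a b c \<tau>0 z) (at \<tau>0)"
proof -
  obtain x y where z: "z = (x, y)"
    by (cases z)
  have "isCont (inv_fourier a) (x - \<tau>0 x + \<tau>0 y)"
    using continuous_on_inv_fourier[OF assms] by (simp add: continuous_on_eq_continuous_at)
  moreover have "((\<lambda>\<tau>::'a \<Rightarrow>\<^sub>L 'a. x - \<tau> x + \<tau> y) \<longlongrightarrow> x - \<tau>0 x + \<tau>0 y) (at \<tau>0)"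
    by (intro tendsto_intros)
  ultimately have "((\<lambda>\<tau>::'a \<Rightarrow>\<^sub>L 'a. inv_fourier a (x - \<tau> x + \<tau> y))
      \<longlongrightarrow> inv_fourier a (x - \<tau>0 x + \<tau>0 y)) (at \<tau>0)"
    by (rule isCont_tendsto_compose)
  from tendsto_mult_left[OF this, of "c (x, y) * b (x - y)"] show ?thesis
    by (simp add: kernelK_def z)
qed

theorem mainTheorem13:
  fixes a :: "'a::euclidean_space \<Rightarrow> complex"
    and b :: "'a \<Rightarrow> complex"
    and c :: "'a \<times> 'a \<Rightarrow> complex"
  assumes "a \<in> schwartz" and "b \<in> schwartz" and "c \<in> symbol_class_inf"
  shows "(\<forall>\<tau>. L2 (kernelK a b c \<tau>)) \<and>
         (\<forall>\<tau>0. ((\<lambda>\<tau>. L2_dist (kernelK a b c \<tau>) (kernelK a b c \<tau>0)) \<longlongrightarrow> 0) (at \<tau>0))"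
proof (intro conjI allI)
  show "L2 (kernelK a b c \<tau>)" for \<tau>
    by (rule L2_kernelK[OF assms])
  fix \<tau>0 :: "'a \<Rightarrow>\<^sub>L 'a"
  obtain G where G: "\<And>\<tau> z. norm \<tau> \<le> norm \<tau>0 + 1 \<Longrightarrow>
      (norm (kernelK a b c \<tau> z))\<^sup>2 \<le> G * decay_weight z"
    using kernelK_square_bound[OF assms, where R="norm \<tau>0 + 1"] by blast
  show "((\<lambda>\<tau>. L2_dist (kernelK a b c \<tau>) (kernelK a b c \<tau>0)) \<longlongrightarrow> 0) (at \<tau>0)"
  proof (rule tendsto_L2_dist_dominated)
    show "integrable lborel (\<lambda>z. G * decay_weight z)"
      by (intro integrable_mult_right integrable_decay_weight)
    show "\<forall>\<^sub>F \<tau> in nhds \<tau>0. \<forall>z. (norm (kernelK a b c \<tau> z))\<^sup>2 \<le> G * decay_weight z"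
      using eventually_nhds_norm_le_add_1[of \<tau>0] by (rule eventually_mono) (use G in blast)
  qed (use kernelK_measurable[OF assms] tendsto_kernelK_param[OF assms(1)] in auto)
qed

end
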